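(* For every session type $S$, $\mathrm{Sub}(S) \subseteq \mathrm{Sub}_{BU}(S)$, i.e. every top-down subterm of $S$ is a bottom-up subterm of $S$.
   Context: Session types (possibly containing free variables) are given by the grammar $T ::= \mathsf{end} \mid X \mid \mu X.T \mid {?}[T_1,\dots,T_n].S \mid {!}[T_1,\dots,T_n].S \mid \&\langle l_1:T_1,\dots,l_n:T_n\rangle \mid \oplus\langle l_1:T_1,\dots,l_n:T_n\rangle$ (input, output, branch, select), where $X$ ranges over type variables and $l_i$ over labels. Types are identified up to $\alpha$-conversion, and substitutions are capture-avoiding. The set of bottom-up subterms $\mathrm{Sub}_{BU}(T)$ is defined by recursion on $T$: $\mathrm{Sub}_{BU}(\mathsf{end}) = \{\mathsf{end}\}$; $\mathrm{Sub}_{BU}(X) = \{X\}$; $\mathrm{Sub}_{BU}(\mu X.T') = \{\mu X.T'\} \cup \{S[\mu X.T'/X] \mid S \in \mathrm{Sub}_{BU}(T')\}$; $\mathrm{Sub}_{BU}(\&\langle l_i:T_i\rangle_{i}) = \{\&\langle l_i:T_i\rangle_i\} \cup \bigcup_i \mathrm{Sub}_{BU}(T_i)$, and likewise for $\oplus$; $\mathrm{Sub}_{BU}({?}[T_1,\dots,T_n].S) = \{{?}[T_1,\dots,T_n].S\} \cup \bigcup_i \mathrm{Sub}_{BU}(T_i) \cup \mathrm{Sub}_{BU}(S)$, and likewise for ${!}$. The set of top-down subterms $\mathrm{Sub}(T)$ is the smallest set of types such that $T \in \mathrm{Sub}(T)$ and which is closed under: if $\mu X.T' \in \mathrm{Sub}(T)$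 then $T'[\mu X.T'/X] \in \mathrm{Sub}(T)$; if ${?}[T_1,\dots,T_n].S$ or ${!}[T_1,\dots,T_n].S$ is in $\mathrm{Sub}(T)$ then each $T_i$ and $S$ are in $\mathrm{Sub}(T)$; if $\&\langle l_i:T_i\rangle_i$ or $\oplus\langle l_i:T_i\rangle_i$ is in $\mathrm{Sub}(T)$ then each $T_i$ is in $\mathrm{Sub}(T)$. *)

theory Defs
  imports Main
begin

text \<open>Session types in locally nameless / de Bruijn representation, so that
types are automatically identified up to alpha-conversion.\<close>

datatype 'l sty =
    End
  | TVar nat
  | Mu "'l sty"
  | In "'l sty list" "'l sty"
  | Out "'l sty list" "'l sty"
  | Bra "('l \<times> 'l sty) list"
  | Sel "('l \<times> 'l sty) list"

primrec lift :: "nat \<Rightarrow> 'l sty \<Rightarrow> 'l sty" where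
  "lift k End = End"
| "lift k (TVar i) = TVar (if i < k then i else Suc i)"
| "lift k (Mu T) = Mu (lift (Suc k) T)"
| "lift k (In Ts S) = In (map (lift k) Ts) (lift k S)"
| "lift k (Out Ts S) = Out (map (lift k) Ts) (lift k S)"
| "lift k (Bra ls) = Bra (map (map_prod id (lift k)) ls)"
| "lift k (Sel ls) = Sel (map (map_prod id (lift k)) ls)"

text \<open>Capture-avoiding substitution of U for index k (the binder being
removed), decrementing the indices above k.  subst 0 U T is T[U/X]
where X is the variable bound by the removed binder.\<close>
primrec subst :: "nat \<Rightarrow> 'l sty \<Rightarrow> 'l sty \<Rightarrow> 'l sty" where
  "subst k U End = End"
| "subst k U (TVar i) = (if i < k then TVar i else if i = k then U else TVar (i - 1))"
| "subst k U (Mu T) = Mu (subst (Suc k) (lift 0 U) T)"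
| "subst k U (In Ts S) = In (map (subst k U) Ts) (subst k U S)"
| "subst k U (Out Ts S) = Out (map (subst k U) Ts) (subst k U S)"
| "subst k U (Bra ls) = Bra (map (map_prod id (subst k U)) ls)"
| "subst k U (Sel ls) = Sel (map (map_prod id (subst k U)) ls)"

primrec subBU :: "'l sty \<Rightarrow> 'l sty set" where
  "subBU End = {End}"
| "subBU (TVar i) = {TVar i}"
| "subBU (Mu T) = insert (Mu T) ((\<lambda>S. subst 0 (Mu T) S) ` subBU T)"
| "subBU (In Ts S) = insert (In Ts S) (\<Union> (set (map subBU Ts)) \<union> subBU S)"
| "subBU (Out Ts S) = insert (Out Ts S) (\<Union> (set (map subBU Ts)) \<union> subBU S)"
| "subBU (Bra ls) = insert (Bra ls) (\<Union> (set (map snd (map (map_prod id subBU) ls))))"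
| "subBU (Sel ls) = insert (Sel ls) (\<Union> (set (map snd (map (map_prod id subBU) ls))))"

inductive_set subTD :: "'l sty \<Rightarrow> 'l sty set" for T :: "'l sty" where
  self: "T \<in> subTD T"
| unfold: "Mu T' \<in> subTD T \<Longrightarrow> subst 0 (Mu T') T' \<in> subTD T"
| in_arg: "In Ts S \<in> subTD T \<Longrightarrow> Ti \<in> set Ts \<Longrightarrow> Ti \<in> subTD T"
| in_cont: "In Ts S \<in> subTD T \<Longrightarrow> S \<in> subTD T"
| out_arg: "Out Ts S \<in> subTD T \<Longrightarrow> Ti \<in> set Ts \<Longrightarrow> Ti \<in> subTD T"
| out_cont: "Out Ts S \<in> subTD T \<Longrightarrow> S \<in> subTD T"
| bra: "Bra ls \<in> subTD T \<Longrightarrow> (l, Ti) \<in> set ls \<Longrightarrow> Ti \<in> subTD T"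
| sel: "Sel ls \<in> subTD T \<Longrightarrow> (l, Ti) \<in> set ls \<Longrightarrow> Ti \<in> subTD T"

end

theory Submission
  imports Defs
begin

text \<open>The bottom-up subterms of T form a set that contains T and is closed under
taking immediate successors (components, and the unfolding of a \<open>\<mu>\<close>-type); the
top-down subterms are the least such set.  The only non-trivial closure case is
an element B[\<mu>X.T/X] with B a bottom-up subterm of T: if B is a variable the
element is \<open>\<mu>X.T\<close> itself or a free variable, and otherwise its successors are
the successors of B with \<open>\<mu>X.T\<close> substituted, because unfolding commutes with
substitution by the substitution lemma.\<close>

lemma lift_lift: "j \<le> k \<Longrightarrow> lift (Suc k) (lift j U) = lift j (lift k U)"
  by (induction U arbitrary: j k) auto

lemma subst_lift: "subst k W (lift k T) = T"
  by (induction T arbitrary: k W) (auto simp: map_prod_def split_def intro: map_idI)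

lemma lift_subst: "k \<le> j \<Longrightarrow> lift k (subst j U T) = subst (Suc j) (lift k U) (lift k T)"
  by (induction T arbitrary: k j U) (auto simp: lift_lift map_prod_def split_def)

lemma subst_subst:
  "subst (i + j) U (subst i V T) =
     subst i (subst (i + j) U V) (subst (Suc (i + j)) (lift i U) T)"
proof (induction T arbitrary: i j U V)
  case (TVar n)
  then show ?case by (auto simp: subst_lift)
next
  case (Mu T)
  have "subst (Suc i + j) (lift 0 U) (subst (Suc i) (lift 0 V) T) =
    subst (Suc i) (subst (Suc i + j) (lift 0 U) (lift 0 V))
      (subst (Suc (Suc i + j)) (lift (Suc i) (lift 0 U)) T)"
    by (rule Mu.IH)
  then show ?case by (simp add: lift_subst lift_lift)
qed (auto simp: map_prod_def split_def)

lemma subst_unfold: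
  "subst 0 V (subst 0 (Mu T) T) =
     subst 0 (Mu (subst 1 (lift 0 V) T)) (subst 1 (lift 0 V) T)"
  using subst_subst[of 0 0 V "Mu T" T] by simp

fun succs :: "'l sty \<Rightarrow> 'l sty set" where
  "succs End = {}"
| "succs (TVar i) = {}"
| "succs (Mu T) = {subst 0 (Mu T) T}"
| "succs (In Ts S) = insert S (set Ts)"
| "succs (Out Ts S) = insert S (set Ts)"
| "succs (Bra ls) = snd ` set ls"
| "succs (Sel ls) = snd ` set ls"

lemma succs_subst: "(\<And>n. B \<noteq> TVar n) \<Longrightarrow> succs (subst 0 V B) = subst 0 V ` succs B"
  by (cases B) (auto simp: image_image subst_unfold)

lemma subBU_self: "T \<in> subBU T"
  by (cases T) auto

lemma subBU_succs_closed: "A \<in> subBU T \<Longrightarrow> succs A \<subseteq> subBU T"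
proof (induction T arbitrary: A)
  case (Mu T)
  show ?case
  proof (cases "A = Mu T")
    case True
    then show ?thesis using subBU_self[of T] by auto
  next
    case False
    then obtain B where B: "B \<in> subBU T" "A = subst 0 (Mu T) B"
      using Mu.prems by auto
    show ?thesis
    proof (cases "\<exists>n. B = TVar n")
      case True
      then obtain n where "B = TVar n" by auto
      then show ?thesis using B False by (cases n) auto
    next
      case False
      then have "succs A = subst 0 (Mu T) ` succs B"
        using B succs_subst[of B "Mu T"] by simp
      then show ?thesis using Mu.IH[OF B(1)] by auto
    qed
  qed
qed (use subBU_self in \<open>fastforce simp: image_iff\<close>)+

theorem mainTheorem3:
  fixes S :: "'l sty"
  shows "subTD S \<subseteq> subBU S"
proof
  fix A assume "A \<in> subTD S"
  then show "A \<in> subBU S"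
    by (induction rule: subTD.induct)
      (use subBU_self subBU_succs_closed in \<open>fastforce+\<close>)
qed

end
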